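(* Consider a logical circuit on $n$ logical qubits in which $m$ logical measurements have been performed, in the setting described in the context. Then there exists a full-rank matrix $V\in\mathbb{Z}_2^{m\times m}$, each column $\vec v_i$ of which corresponds to a logical measurement product, such that for each $i$ either $\vec v_i$ is a reliable logical Pauli product, or the (ideal) outcome of the product $\vec v_i$ is always uniformly random ($\pm1$ with probability $1/2$ each) and independent of the outcomes of the products corresponding to the other columns of $V$.
   Context: Setting: $n$ logical qubits, each initialized in a logical Pauli state $|\overline{0}\rangle$ or $|\overline{+}\rangle$ or in a magic state $|\overline{T}\rangle=(|\overline{0}\rangle+e^{i\pi/4}|\overline{1}\rangle)/\sqrt2$, acted on by (possibly classically conditioned) logical Clifford gates and single-qubit logical $\overline{Z}$ or $\overline{X}$ measurements. Upon execution this is a Clifford circuit, so every logical measurement is associated with a logical Pauli operator that can be back-propagated (conjugated by the preceding Clifford gates) to the initialization time. A product of a subset of the $m$ measurements is identified with a vector $\vec v\in\mathbb{Z}_2^m$ whose $j$th entry is $1$ iff the product includes the $j$th measurement. Define $M\in\mathbb{Z}_2^{2n\times m}$ by: the entry in row $i$ (resp. row $n+i$), column $j$ is $1$ iff the back-propagation of measurement $j$ to the initialization time has an $\overline{X}$-component (resp. $\overline{Z}$-component) on logical qubit $i$ (a $\overline{Y}$ has both). Let $\vec e_{x,i},\vec e_{z,i}\in\mathbb{Z}_2^{2n}$ be the unit vectors with a single $1$ in position $i$, respectively $n+i$. Let $B$ be the set containing: both $\vec e_{x,i}$ and $\vec e_{z,i}$ if qubit $i$ is initialized in $|\overline{T}\rangle$;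 only $\vec e_{z,i}$ if qubit $i$ is initialized in $|\overline{0}\rangle$; only $\vec e_{x,i}$ if qubit $i$ is initialized in $|\overline{+}\rangle$. A measurement product $\vec v$ is called a reliable logical Pauli product if $M\vec v\in\operatorname{span}B$.
   Formalization: Each back-propagated logical measurement carries a fixed sign and fixed $\overline{X}$/$\overline{Z}$ components, not depending on earlier outcomes, and each random column is independent of the joint outcomes of all other columns. Apart from conventions, each condition added here is assumed in the paper as well or is needed for the statement above to hold. *)

theory Defs
  imports Complex_Main "HOL-Library.Z2"
begin

datatype init_state = Init0 | InitPlus | InitT

text \<open>Computational basis of n qubits: bit strings b (b q = True means |1> on qubit q),
  with b q = False for q >= n.  States are amplitude functions on this basis.\<close>
definition basis :: "nat \<Rightarrow> (nat \<Rightarrow> bool) set" where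
  "basis n = {b. \<forall>q. n \<le> q \<longrightarrow> \<not> b q}"

type_synonym qstate = "(nat \<Rightarrow> bool) \<Rightarrow> complex"

definition flipb :: "nat \<Rightarrow> (nat \<Rightarrow> bit) \<Rightarrow> (nat \<Rightarrow> bool) \<Rightarrow> (nat \<Rightarrow> bool)" where
  "flipb n x b = (\<lambda>q. if q < n \<and> x q = 1 then \<not> b q else b q)"

text \<open>Hermitian Pauli operator with X-part x and Z-part z (Y = i X Z on each qubit):
  P = i^(number of Y's) * X^x Z^z.\<close>
definition pauli_apply :: "nat \<Rightarrow> (nat \<Rightarrow> bit) \<Rightarrow> (nat \<Rightarrow> bit) \<Rightarrow> qstate \<Rightarrow> qstate" where
  "pauli_apply n x z \<psi> b =
     \<i> ^ card {q. q < n \<and> x q = 1 \<and> z q = 1}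
     * (-1) ^ card {q. q < n \<and> z q = 1 \<and> flipb n x b q}
     * \<psi> (flipb n x b)"

text \<open>Projector onto outcome r (r = True meaning eigenvalue -1) of the observable
  (-1)^s P:  (I + (-1)^(s+r) P) / 2.\<close>
definition meas_proj :: "nat \<Rightarrow> (nat \<Rightarrow> bit) \<Rightarrow> (nat \<Rightarrow> bit) \<Rightarrow> bool \<Rightarrow> bool \<Rightarrow> qstate \<Rightarrow> qstate" where
  "meas_proj n x z s r \<psi> = (\<lambda>b. (\<psi> b + (if s = r then 1 else -1) * pauli_apply n x z \<psi> b) / 2)"

definition amp :: "init_state \<Rightarrow> bool \<Rightarrow> complex" where
  "amp st v = (case st of
      Init0 \<Rightarrow> (if v then 0 else 1)
    | InitPlus \<Rightarrow> 1 / complex_of_real (sqrt 2)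
    | InitT \<Rightarrow> (if v then cis (pi / 4) else 1) / complex_of_real (sqrt 2))"

definition init_vec :: "nat \<Rightarrow> (nat \<Rightarrow> init_state) \<Rightarrow> qstate" where
  "init_vec n init b = (\<Prod>q<n. amp (init q) (b q))"

text \<open>Unnormalised post-measurement state after the first k measurements with outcome
  record os (os ! j = True means outcome -1 of measurement j).  Measurement j measures the
  back-propagated logical Pauli (-1)^(sg j) * P(bx j, bz j) on the initial state
  (Heisenberg picture of the Clifford circuit).\<close>
primrec unnorm :: "nat \<Rightarrow> (nat \<Rightarrow> init_state) \<Rightarrow> (nat \<Rightarrow> nat \<Rightarrow> bit) \<Rightarrow> (nat \<Rightarrow> nat \<Rightarrow> bit)
    \<Rightarrow> (nat \<Rightarrow> bool) \<Rightarrow> nat \<Rightarrow> bool list \<Rightarrow> qstate" where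
  "unnorm n init bx bz sg 0 os = init_vec n init"
| "unnorm n init bx bz sg (Suc k) os =
     meas_proj n (bx k) (bz k) (sg k) (os ! k) (unnorm n init bx bz sg k os)"

definition outcome_prob :: "nat \<Rightarrow> nat \<Rightarrow> (nat \<Rightarrow> init_state) \<Rightarrow> (nat \<Rightarrow> nat \<Rightarrow> bit)
    \<Rightarrow> (nat \<Rightarrow> nat \<Rightarrow> bit) \<Rightarrow> (nat \<Rightarrow> bool) \<Rightarrow> bool list \<Rightarrow> real" where
  "outcome_prob n m init bx bz sg os =
     (\<Sum>b\<in>basis n. (cmod (unnorm n init bx bz sg m os b))\<^sup>2)"

definition event_prob :: "nat \<Rightarrow> nat \<Rightarrow> (nat \<Rightarrow> init_state) \<Rightarrow> (nat \<Rightarrow> nat \<Rightarrow> bit)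
    \<Rightarrow> (nat \<Rightarrow> nat \<Rightarrow> bit) \<Rightarrow> (nat \<Rightarrow> bool) \<Rightarrow> (bool list \<Rightarrow> bool) \<Rightarrow> real" where
  "event_prob n m init bx bz sg E =
     (\<Sum>os\<in>{os. length os = m \<and> E os}. outcome_prob n m init bx bz sg os)"

text \<open>Outcome of the measurement product v, as an element of Z_2 (1 means -1).\<close>
definition prod_outcome :: "nat \<Rightarrow> (nat \<Rightarrow> bit) \<Rightarrow> bool list \<Rightarrow> bit" where
  "prod_outcome m v os = (\<Sum>j<m. v j * (if os ! j then 1 else 0))"

definition Mmat :: "nat \<Rightarrow> (nat \<Rightarrow> nat \<Rightarrow> bit) \<Rightarrow> (nat \<Rightarrow> nat \<Rightarrow> bit) \<Rightarrow> nat \<Rightarrow> nat \<Rightarrow> bit" where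
  "Mmat n bx bz r j = (if r < n then bx j r else bz j (r - n))"

definition mat_vec :: "nat \<Rightarrow> (nat \<Rightarrow> nat \<Rightarrow> bit) \<Rightarrow> (nat \<Rightarrow> bit) \<Rightarrow> (nat \<Rightarrow> bit)" where
  "mat_vec m A v = (\<lambda>r. \<Sum>j<m. A r j * v j)"

definition ex :: "nat \<Rightarrow> nat \<Rightarrow> bit" where
  "ex i = (\<lambda>r. if r = i then 1 else 0)"

definition ez :: "nat \<Rightarrow> nat \<Rightarrow> nat \<Rightarrow> bit" where
  "ez n i = (\<lambda>r. if r = n + i then 1 else 0)"

definition Bset :: "nat \<Rightarrow> (nat \<Rightarrow> init_state) \<Rightarrow> (nat \<Rightarrow> bit) set" where
  "Bset n init = {ex i | i. i < n \<and> init i \<noteq> Init0} \<union> {ez n i | i. i < n \<and> init i \<noteq> InitPlus}"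

definition in_span2 :: "nat \<Rightarrow> (nat \<Rightarrow> bit) set \<Rightarrow> (nat \<Rightarrow> bit) \<Rightarrow> bool" where
  "in_span2 d S w = (\<exists>c :: (nat \<Rightarrow> bit) \<Rightarrow> bit. \<forall>r<d. w r = (\<Sum>u\<in>S. c u * u r))"

definition reliable :: "nat \<Rightarrow> nat \<Rightarrow> (nat \<Rightarrow> init_state) \<Rightarrow> (nat \<Rightarrow> nat \<Rightarrow> bit)
    \<Rightarrow> (nat \<Rightarrow> nat \<Rightarrow> bit) \<Rightarrow> (nat \<Rightarrow> bit) \<Rightarrow> bool" where
  "reliable n m init bx bz v = in_span2 (2 * n) (Bset n init) (mat_vec m (Mmat n bx bz) v)"

text \<open>Full rank of an m x m matrix over Z_2 (V r i = entry in row r, column i):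
  its columns are linearly independent.\<close>
definition full_rank2 :: "nat \<Rightarrow> (nat \<Rightarrow> nat \<Rightarrow> bit) \<Rightarrow> bool" where
  "full_rank2 m V = (\<forall>c :: nat \<Rightarrow> bit. (\<forall>r<m. (\<Sum>i<m. V r i * c i) = 0) \<longrightarrow> (\<forall>i<m. c i = 0))"

definition random_indep :: "nat \<Rightarrow> nat \<Rightarrow> (nat \<Rightarrow> init_state) \<Rightarrow> (nat \<Rightarrow> nat \<Rightarrow> bit)
    \<Rightarrow> (nat \<Rightarrow> nat \<Rightarrow> bit) \<Rightarrow> (nat \<Rightarrow> bool) \<Rightarrow> (nat \<Rightarrow> nat \<Rightarrow> bit) \<Rightarrow> nat \<Rightarrow> bool" where
  "random_indep n m init bx bz sg V i =
    (\<forall>(a :: bit) (c :: nat \<Rightarrow> bit).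
       event_prob n m init bx bz sg
         (\<lambda>os. prod_outcome m (\<lambda>j. V j i) os = a
               \<and> (\<forall>k<m. k \<noteq> i \<longrightarrow> prod_outcome m (\<lambda>j. V j k) os = c k))
       = (1 / 2) * event_prob n m init bx bz sg
         (\<lambda>os. \<forall>k<m. k \<noteq> i \<longrightarrow> prod_outcome m (\<lambda>j. V j k) os = c k))"

end

theory Submission
  imports Defs
begin

(* A Pauli operator P that stabilises the initial state can be inserted before the first
   measurement; commuting it through the measurement projectors flips exactly the outcomes of
   the measurements that anticommute with P and leaves the Born probabilities unchanged. So the
   outcome distribution is invariant under flipping the outcomes by a pattern a in Z_2^m, and
   these patterns form a subspace G. The stabilisers Z_q (qubit q in |0>) and X_q (qubit q in |+>)
   give as patterns exactly the rows of M whose index is not a unit vector of B. A Gaussian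
   elimination yields a basis v_1, ..., v_m of Z_2^m in which every v_i is either orthogonal to
   these rows, i.e. M v_i is in span B, or has a dual vector a in G with a.v_i = 1 and a.v_k = 0 for k <> i; flipping by a
   then swaps the two values of the product v_i while fixing all the other products. *)

(* Z2 rewrites + and * on bit to XOR and AND; we keep the field operations. *)
declare add_bit_eq_xor[simp del] mult_bit_eq_and[simp del]

lemma bit_add_self [simp]: "(x :: bit) + x = 0"
  by (cases x) simp_all

lemma bit_eq_or_eq_add_one: "(x :: bit) = y \<or> x = y + 1"
  by (cases x; cases y) simp_all

definition dot :: "nat \<Rightarrow> (nat \<Rightarrow> bit) \<Rightarrow> (nat \<Rightarrow> bit) \<Rightarrow> bit" where
  "dot m a v = (\<Sum>j<m. a j * v j)"

lemma dot_add_left: "dot m (\<lambda>j. a j + b j) v = dot m a v + dot m b v"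
  by (simp add: dot_def distrib_right sum.distrib)

lemma dot_add_right: "dot m a (\<lambda>j. u j + v j) = dot m a u + dot m a v"
  by (simp add: dot_def distrib_left sum.distrib)

lemma dot_sum_left: "dot m (\<lambda>j. \<Sum>i\<in>I. a i j) v = (\<Sum>i\<in>I. dot m (a i) v)"
  unfolding dot_def by (simp add: sum_distrib_right sum.swap[of _ I])

definition z2_subspace :: "(nat \<Rightarrow> bit) set \<Rightarrow> bool" where
  "z2_subspace G \<longleftrightarrow> (\<lambda>_. 0) \<in> G \<and> (\<forall>a\<in>G. \<forall>b\<in>G. (\<lambda>j. a j + b j) \<in> G)"

lemma z2_subspace_sum:
  assumes G: "z2_subspace G" and "finite I" and "\<And>i. i \<in> I \<Longrightarrow> a i \<in> G"
  shows "(\<lambda>j. \<Sum>i\<in>I. a i j) \<in> G"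
  using assms(2,3) by (induction I rule: finite_induct) (use G in \<open>simp_all add: z2_subspace_def\<close>)

definition has_dual_in :: "(nat \<Rightarrow> bit) set \<Rightarrow> nat \<Rightarrow> (nat \<Rightarrow> nat \<Rightarrow> bit) \<Rightarrow> nat \<Rightarrow> bool" where
  "has_dual_in G m V i \<longleftrightarrow>
     (\<exists>a\<in>G. dot m a (\<lambda>j. V j i) = 1 \<and> (\<forall>k<m. k \<noteq> i \<longrightarrow> dot m a (\<lambda>j. V j k) = 0))"

definition adapted_basis ::
    "(nat \<Rightarrow> bit) set \<Rightarrow> (nat \<Rightarrow> bit) set \<Rightarrow> nat \<Rightarrow> (nat \<Rightarrow> nat \<Rightarrow> bit) \<Rightarrow> bool" where
  "adapted_basis G S m V \<longleftrightarrow> full_rank2 m V \<and>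
     (\<forall>i<m. (\<forall>g\<in>S. dot m g (\<lambda>j. V j i) = 0) \<or> has_dual_in G m V i)"

definition add_col :: "(nat \<Rightarrow> nat \<Rightarrow> bit) \<Rightarrow> nat \<Rightarrow> nat set \<Rightarrow> nat \<Rightarrow> nat \<Rightarrow> bit" where
  "add_col V p K = (\<lambda>r i. if i \<in> K then V r i + V r p else V r i)"

lemma add_col_column:
  "(\<lambda>j. add_col V p K j i) = (if i \<in> K then (\<lambda>j. V j i + V j p) else (\<lambda>j. V j i))"
  by (auto simp: add_col_def)

lemma full_rank2_id: "full_rank2 m (\<lambda>r i. if r = i then 1 else 0)"
proof -
  have "(\<Sum>i<m. (if r = i then 1 else 0) * c i) = c r" if "r < m" for r and c :: "nat \<Rightarrow> bit"
  proof -
    have "(\<Sum>i<m. (if r = i then 1 else 0) * c i) = (\<Sum>i<m. if r = i then c i else 0)"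
      by (rule sum.cong) auto
    then show ?thesis using that by simp
  qed
  then show ?thesis by (simp add: full_rank2_def)
qed

lemma full_rank2_add_col:
  assumes V: "full_rank2 m V" and p: "p < m" "p \<notin> K" and K: "K \<subseteq> {..<m}"
  shows "full_rank2 m (add_col V p K)"
  unfolding full_rank2_def
proof (rule allI, rule impI)
  fix c :: "nat \<Rightarrow> bit"
  assume c: "\<forall>r<m. (\<Sum>i<m. add_col V p K r i * c i) = 0"
  define c' where "c' i = c i + (if i = p then (\<Sum>k\<in>K. c k) else 0)" for i
  have "(\<Sum>i<m. V r i * c' i) = (\<Sum>i<m. add_col V p K r i * c i)" for r
  proof -
    have "(\<Sum>i<m. add_col V p K r i * c i)
        = (\<Sum>i<m. V r i * c i) + (\<Sum>i<m. if i \<in> K then V r p * c i else 0)"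
      by (simp add: sum.distrib[symmetric]) (rule sum.cong, auto simp: add_col_def distrib_right)
    also have "\<dots> = (\<Sum>i<m. V r i * c i) + V r p * (\<Sum>k\<in>K. c k)"
      using K by (simp add: sum.If_cases sum_distrib_left Int_absorb1)
    also have "\<dots> = (\<Sum>i<m. V r i * c' i)"
    proof -
      have "(\<Sum>i<m. V r i * c' i)
          = (\<Sum>i<m. V r i * c i + (if i = p then V r p * (\<Sum>k\<in>K. c k) else 0))"
        by (rule sum.cong) (auto simp: c'_def distrib_left)
      then show ?thesis
        using p by (simp add: sum.distrib)
    qed
    finally show ?thesis by simp
  qed
  then have "\<forall>i<m. c' i = 0"
    using V c unfolding full_rank2_def by simp
  then have off_p: "c i = 0" if "i < m" "i \<noteq> p" for i
    using that by (auto simp: c'_def)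
  then have "(\<Sum>k\<in>K. c k) = 0"
    using K p by (intro sum.neutral) auto
  then have "c p = 0"
    using \<open>\<forall>i<m. c' i = 0\<close> p by (auto simp: c'_def)
  then show "\<forall>i<m. c i = 0"
    using off_p by auto
qed

lemma has_dual_in_add_col:
  assumes "has_dual_in G m V i" "i \<noteq> p" "i \<notin> K" "p < m"
  shows "has_dual_in G m (add_col V p K) i"
  using assms unfolding has_dual_in_def add_col_column by (auto simp: dot_add_right)

lemma reduce_against_duals:
  assumes G: "z2_subspace G" and g: "g \<in> G"
  obtains g' where "g' \<in> G"
    and "\<And>k. k < m \<Longrightarrow> dot m g' (\<lambda>j. V j k)
           = (if has_dual_in G m V k then 0 else dot m g (\<lambda>j. V j k))"
proof -
  define I where "I = {i. i < m \<and> has_dual_in G m V i \<and> dot m g (\<lambda>j. V j i) = 1}"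
  have "\<forall>i\<in>I. \<exists>a. a \<in> G \<and> dot m a (\<lambda>j. V j i) = 1
      \<and> (\<forall>k<m. k \<noteq> i \<longrightarrow> dot m a (\<lambda>j. V j k) = 0)"
    by (auto simp: I_def has_dual_in_def)
  then obtain A where A: "\<And>i. i \<in> I \<Longrightarrow> A i \<in> G \<and> dot m (A i) (\<lambda>j. V j i) = 1
      \<and> (\<forall>k<m. k \<noteq> i \<longrightarrow> dot m (A i) (\<lambda>j. V j k) = 0)"
    by metis
  have "finite I" by (simp add: I_def)
  define g' where "g' = (\<lambda>j. g j + (\<Sum>i\<in>I. A i j))"
  have "g' \<in> G"
    using G g A z2_subspace_sum[OF G \<open>finite I\<close>, of A] by (simp add: g'_def z2_subspace_def)
  moreover have "dot m g' (\<lambda>j. V j k)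
      = (if has_dual_in G m V k then 0 else dot m g (\<lambda>j. V j k))" if k: "k < m" for k
  proof -
    have "(\<Sum>i\<in>I. dot m (A i) (\<lambda>j. V j k)) = (\<Sum>i\<in>I. if i = k then 1 else 0)"
      using A k by (intro sum.cong) auto
    then have "dot m g' (\<lambda>j. V j k) = dot m g (\<lambda>j. V j k) + (if k \<in> I then 1 else 0)"
      using \<open>finite I\<close> by (simp add: g'_def dot_add_left dot_sum_left)
    then show ?thesis
      using k by (cases "dot m g (\<lambda>j. V j k)") (auto simp: I_def)
  qed
  ultimately show thesis using that by blast
qed

lemma adapted_basis_insert:
  assumes G: "z2_subspace G" and g: "g \<in> G" and V: "adapted_basis G S m V"
  shows "\<exists>V'. adapted_basis G (insert g S) m V'"
proof -
  \<comment> \<open>Reduce g against the existing duals; if the reduced g' still pairs with some column p,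
    clear the other columns pairing with g' by adding column p to them, and g' becomes dual to p.\<close>
  obtain g' where "g' \<in> G" and g': "\<And>k. k < m \<Longrightarrow> dot m g' (\<lambda>j. V j k)
      = (if has_dual_in G m V k then 0 else dot m g (\<lambda>j. V j k))"
    using reduce_against_duals[OF G g] by blast
  have V_orth: "\<forall>h\<in>S. dot m h (\<lambda>j. V j i) = 0" if "i < m" "\<not> has_dual_in G m V i" for i
    using V that unfolding adapted_basis_def by blast
  show ?thesis
  proof (cases "\<exists>p<m. dot m g' (\<lambda>j. V j p) = 1")
    case False
    then have "adapted_basis G (insert g S) m V"
      using V g' unfolding adapted_basis_def by (metis bit_not_one_iff insert_iff)
    then show ?thesis by blast
  next
    case True
    then obtain p where p: "p < m" "dot m g' (\<lambda>j. V j p) = 1" by blast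
    then have p_free: "\<not> has_dual_in G m V p" using g' by fastforce
    define K where "K = {k. k < m \<and> k \<noteq> p \<and> dot m g' (\<lambda>j. V j k) = 1}"
    define V' where "V' = add_col V p K"
    have "full_rank2 m V'"
      using V p unfolding V'_def adapted_basis_def
      by (intro full_rank2_add_col) (auto simp: K_def)
    moreover have "has_dual_in G m V' p"
      unfolding has_dual_in_def
    proof (intro bexI conjI allI impI)
      show "dot m g' (\<lambda>j. V' j p) = 1"
        using p by (simp add: V'_def add_col_column K_def)
      show "dot m g' (\<lambda>j. V' j k) = 0" if "k < m" "k \<noteq> p" for k
        using p that by (auto simp: V'_def add_col_column K_def dot_add_right)
    qed fact
    moreover have "(\<forall>h\<in>insert g S. dot m h (\<lambda>j. V' j i) = 0) \<or> has_dual_in G m V' i"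
      if i: "i < m" "i \<noteq> p" for i
    proof (cases "has_dual_in G m V i")
      case True
      then have "i \<notin> K" using g' i by (simp add: K_def)
      then show ?thesis
        using True i p by (simp add: V'_def has_dual_in_add_col)
    next
      case False
      have "dot m g (\<lambda>j. V' j i) = dot m g' (\<lambda>j. V' j i)"
        using False p_free g' i p by (simp add: V'_def add_col_column dot_add_right)
      also have "\<dots> = 0"
        using i p by (cases "dot m g' (\<lambda>j. V j i)")
          (auto simp: V'_def add_col_column K_def dot_add_right)
      finally show ?thesis
        using V_orth[OF i(1) False] V_orth[OF p(1) p_free]
        by (simp add: V'_def add_col_column dot_add_right)
    qed
    ultimately have "adapted_basis G (insert g S) m V'"
      unfolding adapted_basis_def by metis
    then show ?thesis by blast
  qed
qed

lemma adapted_basis_exists: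
  assumes "z2_subspace G" and "finite S" and "S \<subseteq> G"
  shows "\<exists>V. adapted_basis G S m V"
  using assms(2,3)
proof (induction S rule: finite_induct)
  case empty
  show ?case
    using full_rank2_id unfolding adapted_basis_def by blast
next
  case (insert g S)
  then show ?case
    using adapted_basis_insert[OF assms(1)] by blast
qed

definition flip_outcomes :: "(nat \<Rightarrow> bit) \<Rightarrow> bool list \<Rightarrow> bool list" where
  "flip_outcomes a os = map (\<lambda>j. if a j = 1 then \<not> os ! j else os ! j) [0..<length os]"

lemma length_flip_outcomes [simp]: "length (flip_outcomes a os) = length os"
  by (simp add: flip_outcomes_def)

lemma nth_flip_outcomes [simp]:
  "k < length os \<Longrightarrow> flip_outcomes a os ! k = (if a k = 1 then \<not> os ! k else os ! k)"
  by (simp add: flip_outcomes_def)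

lemma flip_outcomes_flip_outcomes:
  "flip_outcomes b (flip_outcomes a os) = flip_outcomes (\<lambda>j. a j + b j) os"
  by (rule nth_equalityI) (auto split: bit.splits)

lemma flip_outcomes_zero [simp]: "flip_outcomes (\<lambda>_. 0) os = os"
  by (rule nth_equalityI) auto

lemma flip_outcomes_involution [simp]: "flip_outcomes a (flip_outcomes a os) = os"
  by (simp add: flip_outcomes_flip_outcomes)

lemma prod_outcome_flip_outcomes:
  assumes "length os = m"
  shows "prod_outcome m v (flip_outcomes a os) = prod_outcome m v os + dot m a v"
proof -
  have "prod_outcome m v (flip_outcomes a os)
      = (\<Sum>j<m. v j * (if os ! j then 1 else 0) + a j * v j)"
    unfolding prod_outcome_def
    using assms by (intro sum.cong) (auto split: bit.splits)
  then show ?thesis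
    by (simp add: sum.distrib prod_outcome_def dot_def)
qed

definition outcome_symmetries ::
    "nat \<Rightarrow> nat \<Rightarrow> (nat \<Rightarrow> init_state) \<Rightarrow> (nat \<Rightarrow> nat \<Rightarrow> bit) \<Rightarrow> (nat \<Rightarrow> nat \<Rightarrow> bit)
      \<Rightarrow> (nat \<Rightarrow> bool) \<Rightarrow> (nat \<Rightarrow> bit) set" where
  "outcome_symmetries n m init bx bz sg = {a. \<forall>os. length os = m \<longrightarrow>
     outcome_prob n m init bx bz sg (flip_outcomes a os) = outcome_prob n m init bx bz sg os}"

lemma z2_subspace_outcome_symmetries: "z2_subspace (outcome_symmetries n m init bx bz sg)"
  unfolding z2_subspace_def outcome_symmetries_def
  by (simp add: flip_outcomes_flip_outcomes[symmetric])

lemma finite_outcome_records: "finite {os :: bool list. length os = m \<and> P os}"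
  by (rule finite_subset[OF _ finite_lists_length_eq[of "UNIV :: bool set" m]]) auto

lemma random_indep_if_dual:
  assumes "has_dual_in (outcome_symmetries n m init bx bz sg) m V i"
  shows "random_indep n m init bx bz sg V i"
  unfolding random_indep_def
proof (intro allI)
  fix a0 :: bit and c :: "nat \<Rightarrow> bit"
  let ?P = "outcome_prob n m init bx bz sg"
  obtain a where a: "a \<in> outcome_symmetries n m init bx bz sg"
    and a_i: "dot m a (\<lambda>j. V j i) = 1"
    and a_k: "\<And>k. k < m \<Longrightarrow> k \<noteq> i \<Longrightarrow> dot m a (\<lambda>j. V j k) = 0"
    using assms unfolding has_dual_in_def by blast
  define R where "R os \<longleftrightarrow> (\<forall>k<m. k \<noteq> i \<longrightarrow> prod_outcome m (\<lambda>j. V j k) os = c k)" for os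
  define E where "E x = {os. length os = m \<and> prod_outcome m (\<lambda>j. V j i) os = x \<and> R os}" for x
  have "{os. length os = m \<and> R os} = E a0 \<union> E (a0 + 1)"
    using bit_eq_or_eq_add_one[of _ a0] by (auto simp: E_def)
  moreover have "E a0 \<inter> E (a0 + 1) = {}" by (auto simp: E_def)
  moreover have "finite (E x)" for x
    unfolding E_def using finite_outcome_records by simp
  ultimately have "event_prob n m init bx bz sg R = sum ?P (E a0) + sum ?P (E (a0 + 1))"
    unfolding event_prob_def by (simp add: sum.union_disjoint)
  moreover have "sum ?P (E a0) = sum ?P (E (a0 + 1))"
  proof (rule sum.reindex_bij_witness[of _ "flip_outcomes a" "flip_outcomes a"])
    fix os
    assume "os \<in> E a0"
    then show "flip_outcomes a os \<in> E (a0 + 1)" and "?P (flip_outcomes a os) = ?P os"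
      using a a_i a_k by (auto simp: E_def R_def prod_outcome_flip_outcomes outcome_symmetries_def)
  next
    fix os
    assume "os \<in> E (a0 + 1)"
    then show "flip_outcomes a os \<in> E a0"
      using a_i a_k by (auto simp: E_def R_def prod_outcome_flip_outcomes add.assoc)
  qed simp_all
  moreover have "event_prob n m init bx bz sg (\<lambda>os. prod_outcome m (\<lambda>j. V j i) os = a0 \<and> R os)
      = sum ?P (E a0)"
    by (simp add: event_prob_def E_def)
  ultimately show "event_prob n m init bx bz sg (\<lambda>os. prod_outcome m (\<lambda>j. V j i) os = a0 \<and> R os)
      = 1 / 2 * event_prob n m init bx bz sg R"
    by simp
qed

definition phase_flip :: "nat \<Rightarrow> qstate \<Rightarrow> qstate" where
  "phase_flip q \<psi> = (\<lambda>b. (if b q then -1 else 1) * \<psi> b)"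

definition bit_flip :: "nat \<Rightarrow> qstate \<Rightarrow> qstate" where
  "bit_flip q \<psi> = (\<lambda>b. \<psi> (b(q := \<not> b q)))"

lemma pauli_apply_phase_flip:
  assumes "q < n"
  shows "pauli_apply n x z (phase_flip q \<psi>) b
     = (if x q = 1 then -1 else 1) * phase_flip q (pauli_apply n x z \<psi>) b"
  using assms by (cases "x q"; cases "b q") (simp_all add: phase_flip_def pauli_apply_def flipb_def)

lemma card_flip_sign:
  fixes z :: "nat \<Rightarrow> bit" and c :: "nat \<Rightarrow> bool"
  assumes "q < n"
  shows "(-1 :: complex) ^ card {q'. q' < n \<and> z q' = 1 \<and> (c(q := \<not> c q)) q'}
       = (if z q = 1 then -1 else 1) * (-1) ^ card {q'. q' < n \<and> z q' = 1 \<and> c q'}"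
proof -
  define T where "T = {q'. q' < n \<and> q' \<noteq> q \<and> z q' = 1 \<and> c q'}"
  have "finite T" "q \<notin> T" by (auto simp: T_def)
  have "{q'. q' < n \<and> z q' = 1 \<and> (c(q := \<not> c q)) q'}
      = (if z q = 1 \<and> \<not> c q then insert q T else T)"
    and "{q'. q' < n \<and> z q' = 1 \<and> c q'} = (if z q = 1 \<and> c q then insert q T else T)"
    using assms by (auto simp: T_def)
  then show ?thesis
    using \<open>finite T\<close> \<open>q \<notin> T\<close> by (cases "z q"; cases "c q") simp_all
qed

lemma pauli_apply_bit_flip:
  assumes "q < n"
  shows "pauli_apply n x z (bit_flip q \<psi>) b
     = (if z q = 1 then -1 else 1) * bit_flip q (pauli_apply n x z \<psi>) b"
proof -
  have "flipb n x (b(q := \<not> b q)) = (flipb n x b)(q := \<not> flipb n x b q)"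
    using assms by (auto simp: flipb_def fun_eq_iff)
  then show ?thesis
    using card_flip_sign[OF assms, of z "flipb n x b"]
    by (simp add: pauli_apply_def bit_flip_def)
qed

lemma meas_proj_phase_flip:
  assumes "q < n"
  shows "meas_proj n x z s (if x q = 1 then \<not> r else r) (phase_flip q \<psi>)
     = phase_flip q (meas_proj n x z s r \<psi>)"
  unfolding meas_proj_def fun_eq_iff pauli_apply_phase_flip[OF assms]
  by (intro allI; cases "x q"; cases s; cases r) (simp_all add: phase_flip_def algebra_simps)

lemma meas_proj_bit_flip:
  assumes "q < n"
  shows "meas_proj n x z s (if z q = 1 then \<not> r else r) (bit_flip q \<psi>)
     = bit_flip q (meas_proj n x z s r \<psi>)"
  unfolding meas_proj_def fun_eq_iff pauli_apply_bit_flip[OF assms]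
  by (intro allI; cases "z q"; cases s; cases r) (simp_all add: bit_flip_def algebra_simps)

lemma unnorm_flip_outcomes:
  assumes init: "U (init_vec n init) = init_vec n init"
    and meas: "\<And>j r \<psi>. meas_proj n (bx j) (bz j) (sg j) (if a j = 1 then \<not> r else r) (U \<psi>)
                    = U (meas_proj n (bx j) (bz j) (sg j) r \<psi>)"
    and "k \<le> length os"
  shows "unnorm n init bx bz sg k (flip_outcomes a os) = U (unnorm n init bx bz sg k os)"
  using assms(3)
proof (induction k)
  case 0
  then show ?case using init by simp
next
  case (Suc k)
  then show ?case using meas by simp
qed

lemma outcome_symmetry_if_stabilizer:
  assumes "U (init_vec n init) = init_vec n init"
    and "\<And>j r \<psi>. meas_proj n (bx j) (bz j) (sg j) (if a j = 1 then \<not> r else r) (U \<psi>)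
                    = U (meas_proj n (bx j) (bz j) (sg j) r \<psi>)"
    and "\<And>\<psi>. (\<Sum>b\<in>basis n. (cmod (U \<psi> b))\<^sup>2) = (\<Sum>b\<in>basis n. (cmod (\<psi> b))\<^sup>2)"
  shows "a \<in> outcome_symmetries n m init bx bz sg"
  using assms unfolding outcome_symmetries_def outcome_prob_def
  by (simp add: unnorm_flip_outcomes)

lemma phase_flip_outcome_symmetry:
  assumes q: "q < n" and "init q = Init0"
  shows "(\<lambda>j. bx j q) \<in> outcome_symmetries n m init bx bz sg"
proof (rule outcome_symmetry_if_stabilizer)
  have "init_vec n init b = 0" if "b q" for b
    using assms that unfolding init_vec_def by (auto simp: amp_def intro!: bexI[of _ q])
  then show "phase_flip q (init_vec n init) = init_vec n init"
    by (auto simp: phase_flip_def)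
  show "(\<Sum>b\<in>basis n. (cmod (phase_flip q \<psi> b))\<^sup>2) = (\<Sum>b\<in>basis n. (cmod (\<psi> b))\<^sup>2)" for \<psi>
    by (intro sum.cong) (auto simp: phase_flip_def norm_mult)
qed (simp add: meas_proj_phase_flip[OF q])

lemma bit_flip_outcome_symmetry:
  assumes q: "q < n" and "init q = InitPlus"
  shows "(\<lambda>j. bz j q) \<in> outcome_symmetries n m init bx bz sg"
proof (rule outcome_symmetry_if_stabilizer)
  show "bit_flip q (init_vec n init) = init_vec n init"
    using assms unfolding bit_flip_def init_vec_def
    by (intro ext prod.cong) (auto simp: amp_def)
  show "(\<Sum>b\<in>basis n. (cmod (bit_flip q \<psi> b))\<^sup>2) = (\<Sum>b\<in>basis n. (cmod (\<psi> b))\<^sup>2)" for \<psi>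
    unfolding bit_flip_def
    by (rule sum.reindex_bij_witness[of _ "\<lambda>b. b(q := \<not> b q)" "\<lambda>b. b(q := \<not> b q)"])
      (use q in \<open>auto simp: basis_def\<close>)
qed (simp add: meas_proj_bit_flip[OF q])

definition stabilizer_patterns ::
    "nat \<Rightarrow> (nat \<Rightarrow> init_state) \<Rightarrow> (nat \<Rightarrow> nat \<Rightarrow> bit) \<Rightarrow> (nat \<Rightarrow> nat \<Rightarrow> bit) \<Rightarrow> (nat \<Rightarrow> bit) set"
  where
  "stabilizer_patterns n init bx bz =
     (\<lambda>q j. bx j q) ` {q. q < n \<and> init q = Init0} \<union> (\<lambda>q j. bz j q) ` {q. q < n \<and> init q = InitPlus}"

lemma stabilizer_patterns_outcome_symmetries:
  "stabilizer_patterns n init bx bz \<subseteq> outcome_symmetries n m init bx bz sg"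
  by (auto simp: stabilizer_patterns_def phase_flip_outcome_symmetry bit_flip_outcome_symmetry)

lemma in_span2_unit_vectors:
  assumes "finite S" and "S \<subseteq> range ex" and "\<And>r. r < d \<Longrightarrow> w r \<noteq> 0 \<Longrightarrow> ex r \<in> S"
  shows "in_span2 d S w"
proof -
  have ex_inj: "ex r = ex s \<longleftrightarrow> r = s" for r s
    by (metis ex_def zero_neq_one)
  define c where "c u = w (SOME r. u = ex r)" for u
  have c_ex: "c (ex s) * ex s r = (if ex s = ex r then w r else 0)" for s r
    by (simp add: c_def ex_inj) (simp add: ex_def)
  have "w r = (\<Sum>u\<in>S. c u * u r)" if "r < d" for r
  proof -
    have "(\<Sum>u\<in>S. c u * u r) = (\<Sum>u\<in>S. if u = ex r then w r else 0)"
    proof (rule sum.cong[OF refl])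
      fix u
      assume "u \<in> S"
      then obtain s where "u = ex s"
        using \<open>S \<subseteq> range ex\<close> by blast
      then show "c u * u r = (if u = ex r then w r else 0)"
        using c_ex by simp
    qed
    also have "\<dots> = w r"
      using assms that by (cases "w r") auto
    finally show ?thesis ..
  qed
  then show ?thesis
    unfolding in_span2_def by blast
qed

lemma reliable_if_orthogonal:
  assumes "\<forall>g\<in>stabilizer_patterns n init bx bz. dot m g v = 0"
  shows "reliable n m init bx bz v"
proof -
  have ez_ex: "ez n q = ex (n + q)" for q
    by (simp add: ez_def ex_def)
  have "finite (Bset n init)"
    by (simp add: Bset_def)
  moreover have "Bset n init \<subseteq> range ex"
    by (auto simp: Bset_def ez_ex)
  moreover have "ex r \<in> Bset n init"
    if r: "r < 2 * n" and nonzero: "mat_vec m (Mmat n bx bz) v r \<noteq> 0" for r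
  proof (cases "r < n")
    case True
    then have "dot m (\<lambda>j. bx j r) v \<noteq> 0"
      using nonzero by (simp add: mat_vec_def Mmat_def dot_def)
    then have "init r \<noteq> Init0"
      using assms True by (auto simp: stabilizer_patterns_def)
    then show ?thesis
      using True by (auto simp: Bset_def)
  next
    case False
    define q where "q = r - n"
    have q: "r = n + q" "q < n"
      using False r by (simp_all add: q_def)
    then have "dot m (\<lambda>j. bz j q) v \<noteq> 0"
      using nonzero by (simp add: mat_vec_def Mmat_def dot_def)
    then have "init q \<noteq> InitPlus"
      using assms q by (auto simp: stabilizer_patterns_def)
    then show ?thesis
      using q by (auto simp: Bset_def ez_ex)
  qed
  ultimately show ?thesis
    unfolding reliable_def by (rule in_span2_unit_vectors)
qed

theorem lemma1:
  fixes n m :: nat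
    and init :: "nat \<Rightarrow> init_state"
    and bx bz :: "nat \<Rightarrow> nat \<Rightarrow> bit"
    and sg :: "nat \<Rightarrow> bool"
  shows "\<exists>V :: nat \<Rightarrow> nat \<Rightarrow> bit. full_rank2 m V \<and>
           (\<forall>i<m. reliable n m init bx bz (\<lambda>j. V j i)
                  \<or> random_indep n m init bx bz sg V i)"
proof -
  have "finite (stabilizer_patterns n init bx bz)"
    by (simp add: stabilizer_patterns_def)
  then obtain V where V: "adapted_basis (outcome_symmetries n m init bx bz sg)
      (stabilizer_patterns n init bx bz) m V"
    using adapted_basis_exists[OF z2_subspace_outcome_symmetries
      _ stabilizer_patterns_outcome_symmetries] by blast
  show ?thesis
  proof (intro exI conjI allI impI)
    show "full_rank2 m V"
      using V by (simp add: adapted_basis_def)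
    show "reliable n m init bx bz (\<lambda>j. V j i) \<or> random_indep n m init bx bz sg V i" if "i < m" for i
      using V that reliable_if_orthogonal random_indep_if_dual by (auto simp: adapted_basis_def)
  qed
qed

end
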